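(* Let $G$ be a Polish group. Then every Haar meager subset of $G$ is meager in $G$.
   Context: Let $G$ be a Polish group (not necessarily abelian). A set $A\subseteq G$ is called Haar meager if there exist a Borel set $B\subseteq G$ with $A\subseteq B$, a compact metric space $K$, and a continuous map $f\colon K\to G$ such that $f^{-1}(gBh)$ is meager in $K$ for every $g,h\in G$. *)

theory Defs
  imports "HOL-Analysis.Analysis"
begin

definition nowhere_dense_in :: "'a topology \<Rightarrow> 'a set \<Rightarrow> bool" where
  "nowhere_dense_in X S \<longleftrightarrow> S \<subseteq> topspace X \<and> X interior_of (X closure_of S) = {}"

definition meager_in :: "'a topology \<Rightarrow> 'a set \<Rightarrow> bool" where
  "meager_in X S \<longleftrightarrow>
     (\<exists>F :: nat \<Rightarrow> 'a set. (\<forall>n. nowhere_dense_in X (F n)) \<and> S \<subseteq> (\<Union>n. F n))"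

text \<open>Haar meager sets in a (not necessarily abelian) topological group, written additively:
  the two-sided translate g B h is {g + b + h | b in B}. The compact metric space K is a
  nonempty compact subset of a metric type 'k with the subspace topology.\<close>
definition haar_meager :: "'k::metric_space itself \<Rightarrow> 'a::topological_group_add set \<Rightarrow> bool" where
  "haar_meager _ A \<longleftrightarrow>
     (\<exists>B (K :: 'k set) (f :: 'k \<Rightarrow> 'a).
        B \<in> sets borel \<and> A \<subseteq> B \<and> compact K \<and> K \<noteq> {} \<and> continuous_on K f \<and>
        (\<forall>g h. meager_in (top_of_set K) {x \<in> K. f x \<in> (\<lambda>b. g + b + h) ` B}))"

end

theory Submission
  imports Defs
begin

text \<open>A Borel set B containing A has the Baire property: it differs from an open set U by a
  meager set M, and U is nonempty because A is not meager. If f is continuous on a space with a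
  countable \<pi>-base, such as a compact metric space K, then the preimage of g + M under f is meager
  for all g outside a meager set: cover M by closed nowhere dense sets C; if the preimage of g + C
  contains a basic open set W, then g lies in the nowhere dense set of all g with f x \<in> g + C for
  one fixed x \<in> W. As the group is completely metrizable, the nonempty open set of g with
  f k0 \<in> g + U (for a fixed k0 \<in> K) is not meager and so contains such a g. The preimage of g + U
  is then a nonempty open subset of K covered by the preimages of g + B and g + M, so by the Baire
  category theorem for K the preimage of g + B is not meager.\<close>

lemma nowhere_dense_in_empty [simp]: "nowhere_dense_in X {}"
  unfolding nowhere_dense_in_def by simp

lemma nowhere_dense_in_subset:
  assumes "nowhere_dense_in X S" "T \<subseteq> S"
  shows "nowhere_dense_in X T"
proof -
  have "X interior_of (X closure_of T) \<subseteq> X interior_of (X closure_of S)"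
    by (intro interior_of_mono closure_of_mono assms(2))
  then show ?thesis using assms unfolding nowhere_dense_in_def by auto
qed

lemma nowhere_dense_in_closedin_iff:
  assumes "closedin X S"
  shows "nowhere_dense_in X S \<longleftrightarrow> X interior_of S = {}"
  using assms unfolding nowhere_dense_in_def by (simp add: closedin_subset closure_of_closedin)

lemma nowhere_dense_in_homeomorphic_image:
  assumes "homeomorphic_map X Y f" "nowhere_dense_in X S"
  shows "nowhere_dense_in Y (f ` S)"
proof -
  have S: "S \<subseteq> topspace X" using assms(2) unfolding nowhere_dense_in_def by blast
  then have "f ` S \<subseteq> topspace Y"
    using assms(1) homeomorphic_imp_surjective_map by blast
  moreover have "Y interior_of (Y closure_of (f ` S)) = f ` (X interior_of (X closure_of S))"
    using assms(1) S
    by (simp add: homeomorphic_map_closure_of homeomorphic_map_interior_of closure_of_subset_topspace)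
  ultimately show ?thesis using assms(2) unfolding nowhere_dense_in_def by simp
qed

lemma nowhere_dense_in_closed_diff_interior:
  assumes "closed C"
  shows "nowhere_dense_in euclidean (C - interior C)"
proof -
  have "interior (C - interior C) \<subseteq> interior C \<inter> (C - interior C)"
    using interior_mono[of "C - interior C" C] interior_subset by blast
  then show ?thesis
    using assms by (simp add: nowhere_dense_in_closedin_iff closed_Diff)
qed

lemma meager_in_iff_countable_cover:
  "meager_in X S \<longleftrightarrow> (\<exists>\<N>. countable \<N> \<and> (\<forall>N\<in>\<N>. nowhere_dense_in X N) \<and> S \<subseteq> \<Union>\<N>)"
proof
  assume "meager_in X S"
  then obtain F :: "nat \<Rightarrow> 'a set" where "\<And>n. nowhere_dense_in X (F n)" "S \<subseteq> (\<Union>n. F n)"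
    unfolding meager_in_def by blast
  then show "\<exists>\<N>. countable \<N> \<and> (\<forall>N\<in>\<N>. nowhere_dense_in X N) \<and> S \<subseteq> \<Union>\<N>"
    by (intro exI[of _ "range F"]) auto
next
  assume "\<exists>\<N>. countable \<N> \<and> (\<forall>N\<in>\<N>. nowhere_dense_in X N) \<and> S \<subseteq> \<Union>\<N>"
  then obtain \<N> where \<N>: "countable \<N>" "\<And>N. N \<in> \<N> \<Longrightarrow> nowhere_dense_in X N" "S \<subseteq> \<Union>\<N>"
    by blast
  show "meager_in X S"
  proof (cases "\<N> = {}")
    case True
    then show ?thesis using \<N>(3) unfolding meager_in_def by (intro exI[of _ "\<lambda>_. {}"]) auto
  next
    case False
    then show ?thesis using \<N> unfolding meager_in_def
      by (intro exI[of _ "from_nat_into \<N>"]) (simp add: from_nat_into range_from_nat_into)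
  qed
qed

lemma meager_in_subset: "meager_in X S \<Longrightarrow> T \<subseteq> S \<Longrightarrow> meager_in X T"
  unfolding meager_in_def by blast

lemma nowhere_dense_imp_meager_in: "nowhere_dense_in X S \<Longrightarrow> meager_in X S"
  unfolding meager_in_def by (intro exI[of _ "\<lambda>_. S"]) auto

lemma meager_in_Union:
  assumes "countable \<S>" "\<And>S. S \<in> \<S> \<Longrightarrow> meager_in X S"
  shows "meager_in X (\<Union>\<S>)"
proof -
  have "\<forall>S\<in>\<S>. \<exists>F::nat \<Rightarrow> _. (\<forall>n. nowhere_dense_in X (F n)) \<and> S \<subseteq> (\<Union>n. F n)"
    using assms(2) unfolding meager_in_def by blast
  then obtain F :: "_ \<Rightarrow> nat \<Rightarrow> _"
    where nd: "\<And>S n. S \<in> \<S> \<Longrightarrow> nowhere_dense_in X (F S n)"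
      and cov: "\<And>S. S \<in> \<S> \<Longrightarrow> S \<subseteq> (\<Union>n. F S n)"
    by metis
  have "countable ((\<lambda>(S, n). F S n) ` (\<S> \<times> UNIV))"
    using assms(1) by simp
  moreover have "\<Union>\<S> \<subseteq> \<Union>((\<lambda>(S, n). F S n) ` (\<S> \<times> UNIV))"
    using cov by fastforce
  ultimately show ?thesis
    unfolding meager_in_iff_countable_cover
    by (intro exI[of _ "(\<lambda>(S, n). F S n) ` (\<S> \<times> UNIV)"]) (auto intro: nd)
qed

lemma meager_in_UN:
  "countable I \<Longrightarrow> (\<And>i. i \<in> I \<Longrightarrow> meager_in X (S i)) \<Longrightarrow> meager_in X (\<Union>i\<in>I. S i)"
  by (rule meager_in_Union) auto

lemma meager_in_Un:
  assumes "meager_in X S" "meager_in X T"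
  shows "meager_in X (S \<union> T)"
proof -
  have "meager_in X (\<Union>{S, T})" using assms by (intro meager_in_Union) auto
  then show ?thesis by simp
qed

lemma meager_in_closed_cover:
  assumes "meager_in X S"
  obtains C :: "nat \<Rightarrow> 'a set"
  where "\<And>n. closedin X (C n)" "\<And>n. X interior_of C n = {}" "S \<subseteq> (\<Union>n. C n)"
proof -
  obtain F :: "nat \<Rightarrow> 'a set" where F: "\<And>n. nowhere_dense_in X (F n)" "S \<subseteq> (\<Union>n. F n)"
    using assms unfolding meager_in_def by blast
  show ?thesis
  proof (rule that)
    show "closedin X (X closure_of F n)" for n
      by simp
    show "X interior_of (X closure_of F n) = {}" for n
      using F(1) unfolding nowhere_dense_in_def by simp
    have "F n \<subseteq> X closure_of F n" for n
      using F(1) unfolding nowhere_dense_in_def by (simp add: closure_of_subset)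
    then show "S \<subseteq> (\<Union>n. X closure_of F n)"
      using F(2) by (meson SUP_mono order_trans)
  qed
qed

lemma openin_meager_in_empty:
  assumes "completely_metrizable_space X \<or> locally_compact_space X \<and> regular_space X"
    and "openin X V" "meager_in X V"
  shows "V = {}"
proof -
  obtain C :: "nat \<Rightarrow> 'a set"
    where C: "\<And>n. closedin X (C n)" "\<And>n. X interior_of C n = {}" "V \<subseteq> (\<Union>n. C n)"
    using meager_in_closed_cover[OF assms(3)] by blast
  have "X interior_of (\<Union>(range C)) = {}"
    using C by (intro Baire_category_alt[OF assms(1)]) auto
  moreover have "V \<subseteq> X interior_of (\<Union>(range C))"
    using assms(2) C(3) by (simp add: interior_of_maximal)
  ultimately show ?thesis by blast
qed

lemma borel_open_modulo_meager:
  fixes S :: "'a::topological_space set"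
  assumes "S \<in> sets borel"
  obtains U where "open U" "meager_in euclidean (sym_diff S U)"
proof -
  have "\<exists>U. open U \<and> meager_in euclidean (sym_diff S U)"
    using assms unfolding sets_borel
  proof (induction rule: sigma_sets.induct)
    case (Basic a)
    then show ?case by (intro exI[of _ a]) (simp add: nowhere_dense_imp_meager_in)
  next
    case Empty
    then show ?case by (intro exI[of _ "{}"]) (simp add: nowhere_dense_imp_meager_in)
  next
    case (Compl a)
    then obtain U where U: "open U" "meager_in euclidean (sym_diff a U)" by blast
    have "sym_diff (UNIV - a) (interior (- U)) \<subseteq> sym_diff a U \<union> (- U - interior (- U))"
      using interior_subset[of "- U"] by blast
    moreover have "meager_in euclidean (sym_diff a U \<union> (- U - interior (- U)))"
      using U by (intro meager_in_Un[OF U(2)] nowhere_dense_imp_meager_in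
          nowhere_dense_in_closed_diff_interior) auto
    ultimately show ?case by (meson meager_in_subset open_interior)
  next
    case (Union a)
    then obtain U where U: "\<And>i. open (U i)" "\<And>i. meager_in euclidean (sym_diff (a i) (U i))"
      by metis
    have "sym_diff (\<Union>i. a i) (\<Union>i. U i) \<subseteq> (\<Union>i. sym_diff (a i) (U i))"
      by blast
    moreover have "meager_in euclidean (\<Union>i. sym_diff (a i) (U i))"
      using U(2) by (intro meager_in_UN) auto
    ultimately show ?case using U(1) by (meson meager_in_subset open_UN)
  qed
  then show ?thesis using that by blast
qed

lemma nowhere_dense_in_reflected_translate:
  fixes C :: "'a::topological_group_add set"
  assumes "nowhere_dense_in euclidean C"
  shows "nowhere_dense_in euclidean {g. -g + c \<in> C}"
proof -
  have inverse: "c + - (- g + c) = g" "- (c + - g) + c = g" for g :: 'a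
    by (simp_all add: minus_add add.assoc)
  then have "homeomorphic_maps euclidean euclidean (\<lambda>d. c + - d) (\<lambda>g. -g + c)"
    unfolding homeomorphic_maps_def by (auto intro!: continuous_intros)
  then have "nowhere_dense_in euclidean ((\<lambda>d. c + - d) ` C)"
    using assms homeomorphic_maps_imp_map nowhere_dense_in_homeomorphic_image by blast
  moreover have "{g. -g + c \<in> C} = (\<lambda>d. c + - d) ` C"
  proof (intro set_eqI iffI)
    fix g assume "g \<in> {g. -g + c \<in> C}"
    then show "g \<in> (\<lambda>d. c + - d) ` C" using inverse(1)[of g] by (metis image_eqI mem_Collect_eq)
  next
    fix g assume "g \<in> (\<lambda>d. c + - d) ` C"
    then show "g \<in> {g. -g + c \<in> C}" using inverse(2) by auto
  qed
  ultimately show ?thesis by simp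
qed

definition countable_pi_base :: "'a topology \<Rightarrow> bool" where
  "countable_pi_base X \<longleftrightarrow>
     (\<exists>\<W>. countable \<W> \<and> (\<forall>W\<in>\<W>. openin X W \<and> W \<noteq> {}) \<and>
          (\<forall>V. openin X V \<and> V \<noteq> {} \<longrightarrow> (\<exists>W\<in>\<W>. W \<subseteq> V)))"

lemma compact_finite_net:
  fixes K :: "'a::metric_space set"
  assumes "compact K" "e > 0"
  obtains F where "finite F" "F \<subseteq> K" "K \<subseteq> (\<Union>y\<in>F. ball y e)"
proof -
  have "K \<subseteq> (\<Union>y\<in>K. ball y e)"
    using assms(2) by auto
  then show ?thesis
    using compactE_image[OF assms(1), of K "\<lambda>y. ball y e"] that by (metis open_ball)
qed

lemma compact_imp_countable_pi_base:
  fixes K :: "'a::metric_space set"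
  assumes "compact K"
  shows "countable_pi_base (top_of_set K)"
proof -
  have "\<exists>F. finite F \<and> F \<subseteq> K \<and> K \<subseteq> (\<Union>y\<in>F. ball y (inverse (Suc n)))" for n :: nat
    using compact_finite_net[OF assms, of "inverse (Suc n)"]
    by (metis inverse_positive_iff_positive of_nat_0_less_iff zero_less_Suc)
  then obtain F where F: "\<And>n. finite (F n)" "\<And>n. F n \<subseteq> K"
      "\<And>n. K \<subseteq> (\<Union>y\<in>F n. ball y (inverse (Suc n)))"
    by metis
  define \<W> where "\<W> = (\<Union>n. (\<lambda>y. K \<inter> ball y (inverse (Suc n))) ` F n)"
  have "countable \<W>"
    unfolding \<W>_def using F(1) by (simp add: countable_finite)
  moreover have "openin (top_of_set K) W \<and> W \<noteq> {}" if W_in: "W \<in> \<W>" for W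
  proof -
    obtain n y where y: "y \<in> F n" and W: "W = K \<inter> ball y (inverse (Suc n))"
      using W_in unfolding \<W>_def by blast
    have "y \<in> W"
      using F(2) y unfolding W by auto
    then show ?thesis
      unfolding W by blast
  qed
  moreover have "\<exists>W\<in>\<W>. W \<subseteq> V" if V: "openin (top_of_set K) V" "V \<noteq> {}" for V
  proof -
    obtain k where k: "k \<in> V" "k \<in> K"
      using V openin_imp_subset by fastforce
    obtain e where e: "e > 0" "\<And>k'. k' \<in> K \<Longrightarrow> dist k' k < e \<Longrightarrow> k' \<in> V"
      using V(1) k(1) unfolding openin_euclidean_subtopology_iff by blast
    obtain n :: nat where n: "inverse (Suc n) < e / 2"
      using reals_Archimedean[of "e / 2"] e(1) by auto
    obtain y where y: "y \<in> F n" "dist y k < inverse (Suc n)"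
      using F(3) k(2) by fastforce
    have "K \<inter> ball y (inverse (Suc n)) \<subseteq> V"
    proof
      fix k' assume k': "k' \<in> K \<inter> ball y (inverse (Suc n))"
      have "dist k' k \<le> dist y k' + dist y k"
        by (rule dist_triangle3)
      also have "\<dots> < e"
        using k' y(2) n by simp
      finally show "k' \<in> V"
        using e(2) k' by blast
    qed
    then show ?thesis
      using y(1) unfolding \<W>_def by blast
  qed
  ultimately show ?thesis
    unfolding countable_pi_base_def by blast
qed

lemma meager_in_translates_with_preimage_interior:
  fixes f :: "'b \<Rightarrow> 'a::topological_group_add"
  assumes X: "countable_pi_base X" and C: "nowhere_dense_in euclidean C"
  shows "meager_in euclidean {g. X interior_of {x \<in> topspace X. -g + f x \<in> C} \<noteq> {}}"
proof -
  obtain \<W> where \<W>: "countable \<W>" "\<forall>W\<in>\<W>. openin X W \<and> W \<noteq> {}"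
      "\<forall>V. openin X V \<and> V \<noteq> {} \<longrightarrow> (\<exists>W\<in>\<W>. W \<subseteq> V)"
    using X unfolding countable_pi_base_def by blast
  define Bad where "Bad W = {g. \<forall>x\<in>W. -g + f x \<in> C}" for W
  have "meager_in euclidean (Bad W)" if W: "W \<in> \<W>" for W
  proof -
    obtain x where x: "x \<in> W"
      using W \<W>(2) by blast
    have "Bad W \<subseteq> {g. -g + f x \<in> C}"
      using x unfolding Bad_def by blast
    then show ?thesis
      using nowhere_dense_in_reflected_translate[OF C, of "f x"]
      by (meson nowhere_dense_imp_meager_in nowhere_dense_in_subset)
  qed
  then have "meager_in euclidean (\<Union>W\<in>\<W>. Bad W)"
    using \<W>(1) by (rule meager_in_UN[rotated])
  moreover have "{g. X interior_of {x \<in> topspace X. -g + f x \<in> C} \<noteq> {}} \<subseteq> (\<Union>W\<in>\<W>. Bad W)"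
  proof
    fix g
    let ?Z = "{x \<in> topspace X. -g + f x \<in> C}"
    assume "g \<in> {g. X interior_of {x \<in> topspace X. -g + f x \<in> C} \<noteq> {}}"
    then have "openin X (X interior_of ?Z) \<and> X interior_of ?Z \<noteq> {}"
      by simp
    then obtain W where W: "W \<in> \<W>" "W \<subseteq> X interior_of ?Z"
      using \<W>(3) by blast
    then have "W \<subseteq> ?Z"
      using interior_of_subset[of X ?Z] by blast
    then have "g \<in> Bad W"
      unfolding Bad_def by blast
    then show "g \<in> (\<Union>W\<in>\<W>. Bad W)"
      using W(1) by blast
  qed
  ultimately show ?thesis
    by (rule meager_in_subset)
qed

lemma meager_in_translates_with_nonmeager_preimage:
  fixes f :: "'b \<Rightarrow> 'a::topological_group_add"
  assumes X: "countable_pi_base X" and f: "continuous_map X euclidean f"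
    and M: "meager_in euclidean M"
  shows "meager_in euclidean {g. \<not> meager_in X {x \<in> topspace X. -g + f x \<in> M}}"
proof -
  obtain C :: "nat \<Rightarrow> 'a set" where C: "\<And>n. closedin euclidean (C n)"
      "\<And>n. euclidean interior_of C n = {}" "M \<subseteq> (\<Union>n. C n)"
    using meager_in_closed_cover[OF M] by blast
  define Thick where "Thick n = {g. X interior_of {x \<in> topspace X. -g + f x \<in> C n} \<noteq> {}}" for n
  have "meager_in euclidean (\<Union>n. Thick n)"
    unfolding Thick_def using C(1,2)
    by (intro meager_in_UN meager_in_translates_with_preimage_interior[OF X])
      (simp_all add: nowhere_dense_in_closedin_iff)
  moreover have "meager_in X {x \<in> topspace X. -g + f x \<in> M}" if g: "g \<notin> (\<Union>n. Thick n)" for g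
  proof -
    have "continuous_map X euclidean ((\<lambda>y. -g + y) \<circ> f)"
      using f by (intro continuous_map_compose) (auto intro!: continuous_intros)
    then have "closedin X {x \<in> topspace X. -g + f x \<in> C n}" for n
      using C(1) by (simp add: o_def closedin_continuous_map_preimage)
    moreover have "X interior_of {x \<in> topspace X. -g + f x \<in> C n} = {}" for n
      using g unfolding Thick_def by blast
    ultimately have "meager_in X (\<Union>n. {x \<in> topspace X. -g + f x \<in> C n})"
      by (intro meager_in_UN nowhere_dense_imp_meager_in) (simp_all add: nowhere_dense_in_closedin_iff)
    moreover have "{x \<in> topspace X. -g + f x \<in> M} \<subseteq> (\<Union>n. {x \<in> topspace X. -g + f x \<in> C n})"
      using C(3) by blast
    ultimately show ?thesis
      by (rule meager_in_subset)
  qed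
  then have "{g. \<not> meager_in X {x \<in> topspace X. -g + f x \<in> M}} \<subseteq> (\<Union>n. Thick n)"
    by blast
  ultimately show ?thesis
    by (rule meager_in_subset)
qed

lemma compact_translate_with_nonmeager_preimage:
  fixes f :: "'k::metric_space \<Rightarrow> 'a::{complete_space, topological_group_add}"
  assumes K: "compact K" "K \<noteq> {}" and f: "continuous_on K f"
    and U: "open U" "U \<noteq> {}" "meager_in euclidean (sym_diff B U)"
  obtains g where "\<not> meager_in (top_of_set K) {x \<in> K. -g + f x \<in> B}"
proof -
  obtain u k0 where u: "u \<in> U" and k0: "k0 \<in> K"
    using K(2) U(2) by blast
  let ?good = "\<lambda>g. meager_in (top_of_set K) {x \<in> K. -g + f x \<in> sym_diff B U}"
  have "openin euclidean {g. -g + f k0 \<in> U}"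
    using openin_continuous_map_preimage[of euclidean euclidean "\<lambda>g. -g + f k0" U] U(1)
    by (simp add: continuous_intros)
  moreover have "meager_in euclidean {g. \<not> ?good g}"
    using f meager_in_translates_with_nonmeager_preimage[OF compact_imp_countable_pi_base[OF K(1)]
        _ U(3)]
    by simp
  moreover have "f k0 + - u \<in> {g. -g + f k0 \<in> U}"
    using u by (simp add: minus_add add.assoc)
  ultimately obtain g where g: "-g + f k0 \<in> U" "?good g"
    using openin_meager_in_empty[OF disjI1[OF completely_metrizable_space_euclidean]]
    by (metis (no_types, lifting) empty_iff meager_in_subset mem_Collect_eq subsetI)
  define V where "V = {x \<in> K. -g + f x \<in> U}"
  have "openin (top_of_set K) V"
    using openin_continuous_map_preimage[of "top_of_set K" euclidean "\<lambda>x. -g + f x" U] f U(1)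
    unfolding V_def by (simp add: continuous_intros)
  moreover have "locally_compact_space (top_of_set K) \<and> regular_space (top_of_set K)"
    using K(1) by (simp add: compact_imp_locally_compact_space compact_space_subtopology
        regular_space_subtopology regular_space_euclidean)
  moreover have "V \<noteq> {}"
    using g(1) k0 unfolding V_def by blast
  ultimately have "\<not> meager_in (top_of_set K) V"
    using openin_meager_in_empty by blast
  moreover have "V \<subseteq> {x \<in> K. -g + f x \<in> B} \<union> {x \<in> K. -g + f x \<in> sym_diff B U}"
    unfolding V_def by blast
  ultimately have "\<not> meager_in (top_of_set K) {x \<in> K. -g + f x \<in> B}"
    using g(2) by (meson meager_in_Un meager_in_subset)
  then show ?thesis
    by (rule that)
qed

theorem theorem2p3:
  fixes A :: "'a::{polish_space, topological_group_add} set"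
  assumes "haar_meager TYPE('k::metric_space) A"
  shows "meager_in euclidean A"
proof (rule ccontr)
  assume A: "\<not> meager_in euclidean A"
  obtain B and K :: "'k set" and f where B: "B \<in> sets borel" "A \<subseteq> B"
    and K: "compact K" "K \<noteq> {}" and f: "continuous_on K f"
    and hm: "\<And>g h. meager_in (top_of_set K) {x \<in> K. f x \<in> (\<lambda>b. g + b + h) ` B}"
    using assms unfolding haar_meager_def by blast
  obtain U where U: "open U" "meager_in euclidean (sym_diff B U)"
    using borel_open_modulo_meager[OF B(1)] .
  have "U \<noteq> {}"
  proof
    assume "U = {}"
    then have "meager_in euclidean B"
      using U(2) by simp
    then show False
      using A B(2) meager_in_subset by blast
  qed
  then obtain g where g: "\<not> meager_in (top_of_set K) {x \<in> K. -g + f x \<in> B}"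
    using compact_translate_with_nonmeager_preimage[OF K f U(1) _ U(2)] by blast
  have "{x \<in> K. -g + f x \<in> B} = {x \<in> K. f x \<in> (\<lambda>b. g + b + 0) ` B}"
    by (force simp: image_iff add.assoc[symmetric])
  then show False
    using g hm[of g 0] by simp
qed

end
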